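(* There is an absolute constant $C>0$ such that the following holds. Fix any $k\ge1$, any collection of $k$ groups with values in $[0,1]$, any target $q\in(0,1)$ and any step size $\eta\in(0,1]$. Running the Group Conditional ACI algorithm for $T$ rounds on any adversarial sequence $g_t\in[0,1]^k$, $\tau_t\in[0,1]$ yields, for every $i\in[k]$ with $T_i>0$, $$\left|\mathrm{Cov}(\Pi_T,G_i)-q\right|\le C\,\frac{\sqrt{\eta T(\eta k+1)}}{T_i\,\eta}.$$
   Context: Group Conditional ACI (GCACI) with coverage target $q$ and step size $\eta$: set $\theta_1=0\in\mathbb{R}^k$; at each round $t=1,\dots,T$ receive $g_t\in[0,1]^k$, predict $\hat\tau_t=\langle\theta_t,g_t\rangle$, receive $\tau_t\in[0,1]$; if $\hat\tau_t<\tau_t$ set $\theta_{t+1}=\theta_t+\eta q\,g_t$ (Update A), otherwise set $\theta_{t+1}=\theta_t-\eta(1-q)\,g_t$ (Update B). Here $g_{t,i}$ is the membership of round $t$ in group $G_i$; $T_i=\sum_{t=1}^T g_{t,i}$ and $\mathrm{Cov}(\Pi_T,G_i)=\frac{1}{T_i}\sum_{t=1}^T\mathbf{1}[\hat\tau_t\ge\tau_t]\,g_{t,i}$. *)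

theory Defs
  imports Complex_Main
begin

text \<open>Rounds are indexed t = 0,1,...,T-1 (paper: 1..T).
  Group memberships: g t j for j < k; vectors in R^k are functions nat => real,
  only coordinates j < k are relevant. theta at index t is the parameter used in round t
  (paper's theta_{t+1}); gcaci_theta ... 0 = 0.\<close>

fun gcaci_theta :: "nat \<Rightarrow> real \<Rightarrow> real \<Rightarrow> (nat \<Rightarrow> nat \<Rightarrow> real) \<Rightarrow> (nat \<Rightarrow> real) \<Rightarrow> nat \<Rightarrow> nat \<Rightarrow> real" where
  "gcaci_theta k q \<eta> g \<tau> 0 = (\<lambda>j. 0)"
| "gcaci_theta k q \<eta> g \<tau> (Suc t) =
     (let \<theta> = gcaci_theta k q \<eta> g \<tau> t;
          p = (\<Sum>j<k. \<theta> j * g t j)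
      in if p < \<tau> t then (\<lambda>j. \<theta> j + \<eta> * q * g t j)
         else (\<lambda>j. \<theta> j - \<eta> * (1 - q) * g t j))"

definition gcaci_pred :: "nat \<Rightarrow> real \<Rightarrow> real \<Rightarrow> (nat \<Rightarrow> nat \<Rightarrow> real) \<Rightarrow> (nat \<Rightarrow> real) \<Rightarrow> nat \<Rightarrow> real" where
  "gcaci_pred k q \<eta> g \<tau> t = (\<Sum>j<k. gcaci_theta k q \<eta> g \<tau> t j * g t j)"

definition group_count :: "(nat \<Rightarrow> nat \<Rightarrow> real) \<Rightarrow> nat \<Rightarrow> nat \<Rightarrow> real" where
  "group_count g T i = (\<Sum>t<T. g t i)"

definition gcaci_cov :: "nat \<Rightarrow> real \<Rightarrow> real \<Rightarrow> (nat \<Rightarrow> nat \<Rightarrow> real) \<Rightarrow> (nat \<Rightarrow> real) \<Rightarrow> nat \<Rightarrow> nat \<Rightarrow> real" where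
  "gcaci_cov k q \<eta> g \<tau> T i =
     (1 / group_count g T i) *
     (\<Sum>t<T. (if gcaci_pred k q \<eta> g \<tau> t \<ge> \<tau> t then 1 else 0) * g t i)"

end

theory Submission
  imports Defs
begin

text \<open>Each round moves \<open>\<theta>\<close> by \<open>c\<^sub>t g\<^sub>t\<close> with \<open>c\<^sub>t = \<eta> (q - 1[covered])\<close>, so unrolling the
  recursion gives \<open>\<theta>\<^sub>T,\<^sub>i = \<eta> T\<^sub>i (q - Cov(\<Pi>\<^sub>T, G\<^sub>i))\<close>. The miscoverage is therefore controlled by
  \<open>|\<theta>\<^sub>T,\<^sub>i| \<le> \<parallel>\<theta>\<^sub>T\<parallel>\<close>. Expanding \<open>\<parallel>\<theta> + c\<^sub>t g\<^sub>t\<parallel>\<^sup>2\<close>, the cross term \<open>2 c\<^sub>t \<langle>\<theta>,g\<^sub>t\<rangle>\<close> is at most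
  \<open>2\<eta>\<close>: under update A the prediction is below \<open>\<tau>\<^sub>t \<le> 1\<close>, under update B it is at least
  \<open>\<tau>\<^sub>t \<ge> 0\<close> while \<open>c\<^sub>t < 0\<close>. Hence \<open>\<parallel>\<theta>\<^sub>T\<parallel>\<^sup>2 \<le> T (2\<eta> + \<eta>\<^sup>2 k)\<close>, and the bound holds with \<open>C = 2\<close>.\<close>

definition gcaci_step :: "nat \<Rightarrow> real \<Rightarrow> real \<Rightarrow> (nat \<Rightarrow> nat \<Rightarrow> real) \<Rightarrow> (nat \<Rightarrow> real) \<Rightarrow> nat \<Rightarrow> real" where
  "gcaci_step k q \<eta> g \<tau> t =
     (if gcaci_pred k q \<eta> g \<tau> t < \<tau> t then \<eta> * q else - (\<eta> * (1 - q)))"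

lemma gcaci_theta_Suc:
  "gcaci_theta k q \<eta> g \<tau> (Suc t) j = gcaci_theta k q \<eta> g \<tau> t j + gcaci_step k q \<eta> g \<tau> t * g t j"
  by (simp add: gcaci_step_def gcaci_pred_def Let_def algebra_simps)

lemma gcaci_step_eq:
  "gcaci_step k q \<eta> g \<tau> t = \<eta> * (q - (if gcaci_pred k q \<eta> g \<tau> t \<ge> \<tau> t then 1 else 0))"
  by (simp add: gcaci_step_def algebra_simps)

lemma gcaci_theta_eq_sum:
  "gcaci_theta k q \<eta> g \<tau> t i = (\<Sum>s<t. gcaci_step k q \<eta> g \<tau> s * g s i)"
  by (induction t) (simp_all add: gcaci_theta_Suc del: gcaci_theta.simps(2))

lemma gcaci_theta_eq:
  "gcaci_theta k q \<eta> g \<tau> t i =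
     \<eta> * (q * group_count g t i -
       (\<Sum>s<t. (if gcaci_pred k q \<eta> g \<tau> s \<ge> \<tau> s then 1 else 0) * g s i))"
  unfolding gcaci_theta_eq_sum gcaci_step_eq group_count_def
  by (simp add: sum_distrib_left sum_subtractf algebra_simps)

lemma gcaci_cov_minus_target:
  assumes "group_count g T i \<noteq> 0" and "\<eta> \<noteq> 0"
  shows "gcaci_cov k q \<eta> g \<tau> T i - q = - gcaci_theta k q \<eta> g \<tau> T i / (group_count g T i * \<eta>)"
  using assms unfolding gcaci_cov_def gcaci_theta_eq by (simp add: field_simps)

lemma gcaci_step_sq_le:
  assumes "0 \<le> q" "q \<le> 1" "0 \<le> \<eta>"
  shows "(gcaci_step k q \<eta> g \<tau> t)\<^sup>2 \<le> \<eta>\<^sup>2"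
  using assms unfolding gcaci_step_def
  by (simp add: power_mult_distrib power_le_one mult_left_le)

lemma gcaci_step_mult_pred_le:
  assumes "0 \<le> q" "q \<le> 1" "0 \<le> \<eta>" "0 \<le> \<tau> t" "\<tau> t \<le> 1"
  shows "gcaci_step k q \<eta> g \<tau> t * gcaci_pred k q \<eta> g \<tau> t \<le> \<eta>"
proof (cases "gcaci_pred k q \<eta> g \<tau> t < \<tau> t")
  case True
  then have "q * gcaci_pred k q \<eta> g \<tau> t \<le> 1"
    using assms by (smt (verit) mult_left_le mult_left_mono)
  then show ?thesis
    using True assms by (simp add: gcaci_step_def mult.assoc mult_left_le)
next
  case False
  then have "0 \<le> \<eta> * (1 - q) * gcaci_pred k q \<eta> g \<tau> t"
    using assms by (intro mult_nonneg_nonneg) auto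
  moreover have "gcaci_step k q \<eta> g \<tau> t = - (\<eta> * (1 - q))"
    using False by (simp add: gcaci_step_def)
  ultimately show ?thesis
    using assms by simp
qed

lemma sum_square_add_scaled:
  fixes a b :: "'a \<Rightarrow> real"
  shows "(\<Sum>j\<in>A. (a j + c * b j)\<^sup>2) =
    (\<Sum>j\<in>A. (a j)\<^sup>2) + 2 * c * (\<Sum>j\<in>A. a j * b j) + c\<^sup>2 * (\<Sum>j\<in>A. (b j)\<^sup>2)"
  by (simp add: power2_sum power_mult_distrib sum.distrib sum_distrib_left algebra_simps)

lemma gcaci_theta_sum_square_le:
  assumes "0 \<le> q" "q \<le> 1" "0 \<le> \<eta>"
    and g_unit: "\<forall>t<T. \<forall>j<k. 0 \<le> g t j \<and> g t j \<le> 1"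
    and \<tau>_unit: "\<forall>t<T. 0 \<le> \<tau> t \<and> \<tau> t \<le> 1"
    and "t \<le> T"
  shows "(\<Sum>j<k. (gcaci_theta k q \<eta> g \<tau> t j)\<^sup>2) \<le> real t * (2 * \<eta> + \<eta>\<^sup>2 * real k)"
  using \<open>t \<le> T\<close>
proof (induction t)
  case 0
  then show ?case by simp
next
  case (Suc t)
  let ?c = "gcaci_step k q \<eta> g \<tau> t"
  have "t < T" using Suc.prems by simp
  have g_norm: "(\<Sum>j<k. (g t j)\<^sup>2) \<le> real k"
    using sum_mono[of "{..<k}" "\<lambda>j. (g t j)\<^sup>2" "\<lambda>_. 1"] g_unit \<open>t < T\<close>
    by (simp add: abs_square_le_1)
  have "?c\<^sup>2 * (\<Sum>j<k. (g t j)\<^sup>2) \<le> \<eta>\<^sup>2 * real k"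
    using gcaci_step_sq_le[OF assms(1-3)] g_norm by (intro mult_mono) (auto simp: sum_nonneg)
  moreover have "2 * ?c * gcaci_pred k q \<eta> g \<tau> t \<le> 2 * \<eta>"
    using gcaci_step_mult_pred_le[OF assms(1-3)] \<tau>_unit \<open>t < T\<close> by simp
  moreover have "(\<Sum>j<k. (gcaci_theta k q \<eta> g \<tau> (Suc t) j)\<^sup>2) =
      (\<Sum>j<k. (gcaci_theta k q \<eta> g \<tau> t j)\<^sup>2) + 2 * ?c * gcaci_pred k q \<eta> g \<tau> t
        + ?c\<^sup>2 * (\<Sum>j<k. (g t j)\<^sup>2)"
    unfolding gcaci_theta_Suc gcaci_pred_def by (rule sum_square_add_scaled)
  moreover have "(\<Sum>j<k. (gcaci_theta k q \<eta> g \<tau> t j)\<^sup>2) \<le> real t * (2 * \<eta> + \<eta>\<^sup>2 * real k)"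
    using Suc by simp
  ultimately show ?case
    by (simp add: distrib_right)
qed

theorem mainTheorem10:
  shows "\<exists>C::real. C > 0 \<and>
    (\<forall>(k::nat) (q::real) (\<eta>::real) (T::nat) (g::nat \<Rightarrow> nat \<Rightarrow> real) (\<tau>::nat \<Rightarrow> real).
       k \<ge> 1 \<longrightarrow> 0 < q \<longrightarrow> q < 1 \<longrightarrow> 0 < \<eta> \<longrightarrow> \<eta> \<le> 1 \<longrightarrow>
       (\<forall>t<T. \<forall>j<k. 0 \<le> g t j \<and> g t j \<le> 1) \<longrightarrow>
       (\<forall>t<T. 0 \<le> \<tau> t \<and> \<tau> t \<le> 1) \<longrightarrow>
       (\<forall>i<k. group_count g T i > 0 \<longrightarrow>
          \<bar>gcaci_cov k q \<eta> g \<tau> T i - q\<bar>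
            \<le> C * sqrt (\<eta> * real T * (\<eta> * real k + 1)) / (group_count g T i * \<eta>)))"
proof (rule exI[of _ 2], intro conjI allI impI)
  fix k T i :: nat and q \<eta> :: real and g :: "nat \<Rightarrow> nat \<Rightarrow> real" and \<tau> :: "nat \<Rightarrow> real"
  assume "0 < q" "q < 1" "0 < \<eta>" "\<eta> \<le> 1"
    and g_unit: "\<forall>t<T. \<forall>j<k. 0 \<le> g t j \<and> g t j \<le> 1"
    and \<tau>_unit: "\<forall>t<T. 0 \<le> \<tau> t \<and> \<tau> t \<le> 1"
    and "i < k" and T_i: "group_count g T i > 0"
  let ?\<theta> = "gcaci_theta k q \<eta> g \<tau> T" and ?B = "\<eta> * real T * (\<eta> * real k + 1)"
  have "(?\<theta> i)\<^sup>2 \<le> (\<Sum>j<k. (?\<theta> j)\<^sup>2)"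
    using \<open>i < k\<close> by (intro member_le_sum) auto
  also have "\<dots> \<le> real T * (2 * \<eta> + \<eta>\<^sup>2 * real k)"
    using \<open>0 < q\<close> \<open>q < 1\<close> \<open>0 < \<eta>\<close> g_unit \<tau>_unit by (intro gcaci_theta_sum_square_le) auto
  also have "\<dots> \<le> 2\<^sup>2 * ?B"
    using \<open>0 < \<eta>\<close> by (simp add: power2_eq_square algebra_simps)
  finally have "sqrt ((?\<theta> i)\<^sup>2) \<le> sqrt (2\<^sup>2 * ?B)"
    by (rule real_sqrt_le_mono)
  then have "\<bar>?\<theta> i\<bar> \<le> 2 * sqrt ?B"
    by (simp add: real_sqrt_mult)
  then show "\<bar>gcaci_cov k q \<eta> g \<tau> T i - q\<bar> \<le> 2 * sqrt ?B / (group_count g T i * \<eta>)"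
    using T_i \<open>0 < \<eta>\<close>
    by (simp add: gcaci_cov_minus_target abs_divide divide_right_mono)
qed simp

end
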